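(* Let $H$ be a graph, $\Delta$ a positive integer, and $C$ a removable cycle in $H$ with $\Delta(C,H)\le\Delta$. Let $\varphi$ be a partial proper $\Delta$-coloring of $H$ such that $\varphi(v)=\perp$ for all $v\in V(C)$. Then there exists a partial proper $\Delta$-coloring $\varphi'$ of $H$ such that $\varphi'(u)\ne\perp$ for all $u\in V(C)$ and $\varphi'(u)=\varphi(u)$ for all $u\in V(H)\setminus V(C)$.
   Context: A simple cycle in a graph $H$ is a sequence $(v_1,\dots,v_k)$ of $k>2$ distinct vertices with $\{v_i,v_{i+1}\}\in E(H)$ for $1\le i<k$ and $\{v_k,v_1\}\in E(H)$; $V(C)$ denotes its vertex set. $H[U]$ is the subgraph induced by $U$, and $d(v,H)$ is the degree of $v$ in $H$. For a simple cycle $C$, $\Delta(C,H)=\max_{v\in V(C)} d(v,H)$. A simple cycle $C$ in $H$ is removable if $H[V(C)]$ is neither isomorphic to a complete graph nor to a cycle graph of odd length. A partial proper $k$-coloring of $H$ is a map $\varphi:V(H)\to\{1,\dots,k\}\cup\{\perp\}$ whose restriction to $U=\{v:\varphi(v)\ne\perp\}$ is a proper $k$-coloring of $H[U]$. *)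

theory Defs
  imports Main
begin

definition graph :: "'a set \<Rightarrow> ('a \<Rightarrow> 'a \<Rightarrow> bool) \<Rightarrow> bool" where
  "graph V E \<longleftrightarrow> finite V \<and> (\<forall>x y. E x y \<longrightarrow> x \<in> V \<and> y \<in> V)
     \<and> (\<forall>x y. E x y \<longrightarrow> E y x) \<and> (\<forall>x. \<not> E x x)"

definition simple_cycle :: "'a set \<Rightarrow> ('a \<Rightarrow> 'a \<Rightarrow> bool) \<Rightarrow> 'a list \<Rightarrow> bool" where
  "simple_cycle V E C \<longleftrightarrow> length C > 2 \<and> distinct C \<and> set C \<subseteq> V
     \<and> (\<forall>i. Suc i < length C \<longrightarrow> E (C ! i) (C ! Suc i))
     \<and> E (last C) (hd C)"

definition degree :: "'a set \<Rightarrow> ('a \<Rightarrow> 'a \<Rightarrow> bool) \<Rightarrow> 'a \<Rightarrow> nat" where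
  "degree V E v = card {u \<in> V. E v u}"

definition max_degree_on_cycle :: "'a set \<Rightarrow> ('a \<Rightarrow> 'a \<Rightarrow> bool) \<Rightarrow> 'a list \<Rightarrow> nat" where
  "max_degree_on_cycle V E C = Max (degree V E ` set C)"

definition induced_complete :: "('a \<Rightarrow> 'a \<Rightarrow> bool) \<Rightarrow> 'a set \<Rightarrow> bool" where
  "induced_complete E U \<longleftrightarrow> (\<forall>x\<in>U. \<forall>y\<in>U. x \<noteq> y \<longrightarrow> E x y)"

text \<open>H[U] is isomorphic to a cycle graph of odd length: U can be cyclically
  ordered so that adjacency within U is exactly cyclic consecutiveness.\<close>
definition induced_odd_cycle :: "('a \<Rightarrow> 'a \<Rightarrow> bool) \<Rightarrow> 'a set \<Rightarrow> bool" where
  "induced_odd_cycle E U \<longleftrightarrow> (\<exists>vs. distinct vs \<and> set vs = U \<and> length vs \<ge> 3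
     \<and> odd (length vs)
     \<and> (\<forall>i<length vs. \<forall>j<length vs.
          E (vs ! i) (vs ! j) \<longleftrightarrow>
            (j = Suc i mod length vs \<or> i = Suc j mod length vs)))"

definition removable :: "'a set \<Rightarrow> ('a \<Rightarrow> 'a \<Rightarrow> bool) \<Rightarrow> 'a list \<Rightarrow> bool" where
  "removable V E C \<longleftrightarrow> simple_cycle V E C \<and>
     \<not> induced_complete E (set C) \<and> \<not> induced_odd_cycle E (set C)"

text \<open>Partial proper k-colouring: None plays the role of \<bottom>; colours are 1..k.\<close>
definition partial_proper_coloring ::
  "'a set \<Rightarrow> ('a \<Rightarrow> 'a \<Rightarrow> bool) \<Rightarrow> nat \<Rightarrow> ('a \<Rightarrow> nat option) \<Rightarrow> bool" where
  "partial_proper_coloring V E k \<phi> \<longleftrightarrow>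
     (\<forall>v\<in>V. \<forall>c. \<phi> v = Some c \<longrightarrow> c \<in> {1..k})
     \<and> (\<forall>u\<in>V. \<forall>v\<in>V. E u v \<and> \<phi> u \<noteq> None \<and> \<phi> v \<noteq> None \<longrightarrow> \<phi> u \<noteq> \<phi> v)"

end

(*
  Give each uncoloured vertex of the cycle the colours not used on its coloured neighbours; by the
  degree bound it has at least as many of them as it has neighbours on the cycle. Colouring greedily
  along the cycle therefore succeeds as soon as the vertex coloured last has one colour to spare.
  Such slack is either present already, or is created by precolouring: a vertex with a colour
  already forbidden at its predecessor, or two non-adjacent neighbours of a common vertex with the
  same free colour. If none of these is possible, all cycle vertices see the same forbidden colours
  and have exactly two neighbours on the cycle, so the cycle is induced; since it is not odd, two
  spare colours colour it alternately.
*)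

theory Submission
  imports Defs
begin

section \<open>Forbidden colours and greedy colouring\<close>

definition forbidden :: "('a \<Rightarrow> 'a \<Rightarrow> bool) \<Rightarrow> ('a \<Rightarrow> nat option) \<Rightarrow> 'a \<Rightarrow> nat set" where
  "forbidden E \<psi> v = {c. \<exists>u. E v u \<and> \<psi> u = Some c}"

definition nbrs_in :: "('a \<Rightarrow> 'a \<Rightarrow> bool) \<Rightarrow> 'a set \<Rightarrow> 'a \<Rightarrow> 'a set" where
  "nbrs_in E S v = {u\<in>S. E v u}"

definition demand :: "('a \<Rightarrow> 'a \<Rightarrow> bool) \<Rightarrow> ('a \<Rightarrow> nat option) \<Rightarrow> 'a set \<Rightarrow> 'a \<Rightarrow> nat" where
  "demand E \<psi> S v = card (forbidden E \<psi> v) + card (nbrs_in E S v)"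

lemma finite_forbidden:
  assumes "graph V E"
  shows "finite (forbidden E \<psi> v)"
proof -
  have "forbidden E \<psi> v \<subseteq> (\<lambda>u. the (\<psi> u)) ` {u\<in>V. E v u}"
    using assms unfolding forbidden_def graph_def by force
  moreover have "finite {u\<in>V. E v u}"
    using assms unfolding graph_def by auto
  ultimately show ?thesis
    using finite_surj by blast
qed

lemma finite_nbrs_in: "finite S \<Longrightarrow> finite (nbrs_in E S v)"
  unfolding nbrs_in_def by auto

lemma forbidden_subset_colours:
  assumes "graph V E" "partial_proper_coloring V E \<Delta> \<psi>"
  shows "forbidden E \<psi> v \<subseteq> {1..\<Delta>}"
  using assms unfolding forbidden_def graph_def partial_proper_coloring_def by blast

lemma ex_free_colour:
  assumes "graph V E" "card (forbidden E \<psi> v) < \<Delta>"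
  shows "\<exists>c\<in>{1..\<Delta>}. c \<notin> forbidden E \<psi> v"
proof (rule ccontr)
  assume "\<not> ?thesis"
  then have "card {1..\<Delta>} \<le> card (forbidden E \<psi> v)"
    using finite_forbidden[OF assms(1)] by (intro card_mono) auto
  then show False
    using assms(2) by simp
qed

lemma partial_proper_coloring_override:
  assumes "graph V E" "partial_proper_coloring V E \<Delta> \<phi>"
    and range: "\<forall>u\<in>U. col u \<in> {1..\<Delta>}" and fresh: "\<forall>u\<in>U. col u \<notin> forbidden E \<phi> u"
    and proper_on: "\<forall>u\<in>U. \<forall>v\<in>U. E u v \<longrightarrow> col u \<noteq> col v"
  shows "partial_proper_coloring V E \<Delta> (\<lambda>v. if v \<in> U then Some (col v) else \<phi> v)"
proof -
  have fresh': "\<phi> v \<noteq> Some (col u)" if "u \<in> U" "E u v" for u v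
    using fresh that unfolding forbidden_def by blast
  have sym: "E v u" if "E u v" for u v
    using assms(1) that unfolding graph_def by blast
  show ?thesis
    unfolding partial_proper_coloring_def
  proof (intro conjI ballI allI impI)
    fix v c
    assume "v \<in> V" "(if v \<in> U then Some (col v) else \<phi> v) = Some c"
    then show "c \<in> {1..\<Delta>}"
      using range assms(2) unfolding partial_proper_coloring_def by (auto split: if_splits)
  next
    fix u v
    assume uv: "u \<in> V" "v \<in> V" "E u v \<and> (if u \<in> U then Some (col u) else \<phi> u) \<noteq> None
      \<and> (if v \<in> U then Some (col v) else \<phi> v) \<noteq> None"
    show "(if u \<in> U then Some (col u) else \<phi> u) \<noteq> (if v \<in> U then Some (col v) else \<phi> v)"
      using uv proper_on fresh' sym[of u v] assms(2) unfolding partial_proper_coloring_def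
      by (cases "u \<in> U"; cases "v \<in> U") (simp_all, metis)
  qed
qed

lemma partial_proper_coloring_fun_upd:
  assumes "graph V E" "partial_proper_coloring V E \<Delta> \<psi>"
    and "c \<in> {1..\<Delta>}" "c \<notin> forbidden E \<psi> v"
  shows "partial_proper_coloring V E \<Delta> (\<psi>(v := Some c))"
proof -
  have "(\<lambda>x. if x \<in> {v} then Some c else \<psi> x) = \<psi>(v := Some c)"
    by auto
  moreover have "\<not> E v v"
    using assms(1) unfolding graph_def by blast
  ultimately show ?thesis
    using partial_proper_coloring_override[OF assms(1,2), of "{v}" "\<lambda>_. c"] assms(3,4) by auto
qed

lemma forbidden_fun_upd_subset:
  "forbidden E (\<psi>(w := Some c)) v \<subseteq> insert c (forbidden E \<psi> v)"
  unfolding forbidden_def by auto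

lemma forbidden_fun_upd_not_adjacent:
  "\<not> E v w \<Longrightarrow> forbidden E (\<psi>(w := Some c)) v = forbidden E \<psi> v"
  unfolding forbidden_def by auto

lemma card_forbidden_fun_upd:
  assumes "graph V E"
  shows "card (forbidden E (\<psi>(w := Some c)) v)
           \<le> card (forbidden E \<psi> v) + (if E v w \<and> c \<notin> forbidden E \<psi> v then 1 else 0)"
proof -
  have fin: "finite (insert c (forbidden E \<psi> v))"
    using finite_forbidden[OF assms] by simp
  have "forbidden E (\<psi>(w := Some c)) v \<subseteq>
      (if E v w \<and> c \<notin> forbidden E \<psi> v then insert c (forbidden E \<psi> v) else forbidden E \<psi> v)"
    using forbidden_fun_upd_subset[of E \<psi> w c v] forbidden_fun_upd_not_adjacent[of E v w \<psi> c]
    by (auto split: if_splits)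
  then have "card (forbidden E (\<psi>(w := Some c)) v) \<le>
      card (if E v w \<and> c \<notin> forbidden E \<psi> v then insert c (forbidden E \<psi> v) else forbidden E \<psi> v)"
    using fin by (intro card_mono) (auto split: if_splits)
  then show ?thesis
    using finite_forbidden[OF assms] by (simp split: if_splits)
qed

lemma card_nbrs_in_Diff:
  assumes "finite S" "w \<in> S"
  shows "card (nbrs_in E (S - {w}) v) + (if E v w then 1 else 0) = card (nbrs_in E S v)"
proof -
  have "nbrs_in E (S - {w}) v = nbrs_in E S v - {w}"
    unfolding nbrs_in_def by auto
  moreover have "w \<in> nbrs_in E S v \<longleftrightarrow> E v w"
    using assms(2) unfolding nbrs_in_def by auto
  ultimately show ?thesis
    using card.remove[OF finite_nbrs_in[OF assms(1)], of w E v] by auto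
qed

text \<open>For a neighbour of \<open>w\<close>, losing \<open>w\<close> from \<open>S\<close> and gaining \<open>c\<close> as a forbidden colour
  cancel out, unless \<open>c\<close> was forbidden there already.\<close>
lemma demand_fun_upd:
  assumes "graph V E" "finite S" "w \<in> S"
  shows "demand E (\<psi>(w := Some c)) (S - {w}) v + (if E v w \<and> c \<in> forbidden E \<psi> v then 1 else 0)
           \<le> demand E \<psi> S v"
  using card_forbidden_fun_upd[OF assms(1), of \<psi> w c v] card_nbrs_in_Diff[OF assms(2,3), of E v]
  unfolding demand_def by (auto split: if_splits)

text \<open>Colouring \<open>S\<close> greedily in increasing order of \<open>f\<close> never gets stuck: when a vertex
  is reached it either has slack or a later neighbour in \<open>S\<close> is still uncoloured.\<close>
definition greedy_order ::
  "('a \<Rightarrow> 'a \<Rightarrow> bool) \<Rightarrow> nat \<Rightarrow> ('a \<Rightarrow> nat option) \<Rightarrow> 'a set \<Rightarrow> ('a \<Rightarrow> nat) \<Rightarrow> bool" where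
  "greedy_order E \<Delta> \<psi> S f \<longleftrightarrow>
     (\<forall>v\<in>S. demand E \<psi> S v \<le> \<Delta> \<and> (demand E \<psi> S v < \<Delta> \<or> (\<exists>u\<in>S. E v u \<and> f v < f u)))"

lemma greedy_order_card_forbidden_less:
  assumes "finite S" "greedy_order E \<Delta> \<psi> S f" "w \<in> S"
  shows "card (forbidden E \<psi> w) < \<Delta>"
proof (cases "demand E \<psi> S w < \<Delta>")
  case True
  then show ?thesis
    unfolding demand_def by simp
next
  case False
  then obtain u where "u \<in> nbrs_in E S w"
    using assms(2,3) unfolding greedy_order_def nbrs_in_def by blast
  then have "card (nbrs_in E S w) > 0"
    using finite_nbrs_in[OF assms(1)] card_gt_0_iff by blast
  moreover have "demand E \<psi> S w \<le> \<Delta>"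
    using assms(2,3) unfolding greedy_order_def by blast
  ultimately show ?thesis
    unfolding demand_def by linarith
qed

lemma greedy_order_fun_upd_Diff:
  assumes "graph V E" "finite S" "greedy_order E \<Delta> \<psi> S f" "w \<in> S" "\<forall>v\<in>S. f w \<le> f v"
  shows "greedy_order E \<Delta> (\<psi>(w := Some c)) (S - {w}) f"
  unfolding greedy_order_def
proof
  fix v
  assume v: "v \<in> S - {w}"
  have le: "demand E (\<psi>(w := Some c)) (S - {w}) v \<le> demand E \<psi> S v"
    using demand_fun_upd[OF assms(1,2,4), of \<psi> c v] by linarith
  have later: "\<exists>u\<in>S - {w}. E v u \<and> f v < f u" if "\<exists>u\<in>S. E v u \<and> f v < f u"
    using that v assms(5) by force
  have "demand E \<psi> S v \<le> \<Delta> \<and> (demand E \<psi> S v < \<Delta> \<or> (\<exists>u\<in>S. E v u \<and> f v < f u))"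
    using assms(3) v unfolding greedy_order_def by blast
  then show "demand E (\<psi>(w := Some c)) (S - {w}) v \<le> \<Delta> \<and>
      (demand E (\<psi>(w := Some c)) (S - {w}) v < \<Delta> \<or> (\<exists>u\<in>S - {w}. E v u \<and> f v < f u))"
    using le later by (meson le_less_trans le_trans)
qed

lemma greedy_order_extension:
  assumes "graph V E" "S \<subseteq> V" "partial_proper_coloring V E \<Delta> \<psi>" "greedy_order E \<Delta> \<psi> S f"
  shows "\<exists>\<psi>'. partial_proper_coloring V E \<Delta> \<psi>' \<and> (\<forall>v\<in>S. \<psi>' v \<noteq> None) \<and> (\<forall>v. v \<notin> S \<longrightarrow> \<psi>' v = \<psi> v)"
proof -
  have "finite S"
    using assms(1,2) finite_subset unfolding graph_def by blast
  then show ?thesis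
    using assms(3,4)
  proof (induction S arbitrary: \<psi> rule: finite_remove_induct)
    case empty
    then show ?case by auto
  next
    case (remove S)
    have "Min (f ` S) \<in> f ` S"
      using remove.hyps(1,2) by simp
    then obtain w where "w \<in> S" "f w = Min (f ` S)"
      by auto
    then have w: "w \<in> S" "\<forall>v\<in>S. f w \<le> f v"
      using remove.hyps(1) by auto
    obtain c where c: "c \<in> {1..\<Delta>}" "c \<notin> forbidden E \<psi> w"
      using ex_free_colour[OF assms(1) greedy_order_card_forbidden_less[OF remove.hyps(1) remove.prems(2) w(1)]]
      by blast
    obtain \<psi>' where \<psi>': "partial_proper_coloring V E \<Delta> \<psi>'" "\<forall>v\<in>S - {w}. \<psi>' v \<noteq> None"
        "\<forall>v. v \<notin> S - {w} \<longrightarrow> \<psi>' v = (\<psi>(w := Some c)) v"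
      using remove.IH[OF w(1) partial_proper_coloring_fun_upd[OF assms(1) remove.prems(1) c]
          greedy_order_fun_upd_Diff[OF assms(1) remove.hyps(1) remove.prems(2) w]]
      by blast
    have "\<forall>v\<in>S. \<psi>' v \<noteq> None"
      using \<psi>'(2,3) by (metis DiffI fun_upd_same option.distinct(1) singletonD)
    moreover have "\<forall>v. v \<notin> S \<longrightarrow> \<psi>' v = \<psi> v"
      using \<psi>'(3) w(1) by auto
    ultimately show ?case
      using \<psi>'(1) by blast
  qed
qed

section \<open>Hamiltonian cycles given as lists\<close>

definition ham_cycle :: "('a \<Rightarrow> 'a \<Rightarrow> bool) \<Rightarrow> 'a set \<Rightarrow> 'a list \<Rightarrow> bool" where
  "ham_cycle E U D \<longleftrightarrow> distinct D \<and> set D = U \<and> 3 \<le> length D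
     \<and> (\<forall>i<length D. E (D ! i) (D ! (Suc i mod length D)))"

lemma simple_cycle_imp_ham_cycle:
  assumes "simple_cycle V E C"
  shows "ham_cycle E (set C) C"
  unfolding ham_cycle_def
proof (intro conjI allI impI)
  fix i
  assume i: "i < length C"
  show "E (C ! i) (C ! (Suc i mod length C))"
  proof (cases "Suc i < length C")
    case True
    then show ?thesis
      using assms unfolding simple_cycle_def by simp
  next
    case False
    then have "Suc i = length C"
      using i by simp
    then have "i = length C - 1" "Suc i mod length C = 0"
      by auto
    moreover have "C \<noteq> []"
      using i by auto
    ultimately show ?thesis
      using assms unfolding simple_cycle_def by (simp add: last_conv_nth hd_conv_nth)
  qed
qed (use assms in \<open>auto simp: simple_cycle_def\<close>)

lemma ham_cycle_nth_in:
  "ham_cycle E U D \<Longrightarrow> t < length D \<Longrightarrow> D ! t \<in> U"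
  unfolding ham_cycle_def by auto

lemma ham_cycle_obtain_nth:
  assumes "ham_cycle E U D" "v \<in> U"
  obtains t where "t < length D" "v = D ! t"
  using assms unfolding ham_cycle_def by (metis in_set_conv_nth)

lemma ham_cycle_edge:
  "ham_cycle E U D \<Longrightarrow> Suc i < length D \<Longrightarrow> E (D ! i) (D ! Suc i)"
  unfolding ham_cycle_def by (metis Suc_lessD mod_less)

lemma ham_cycle_edge_last:
  assumes "ham_cycle E U D"
  shows "E (D ! (length D - 1)) (D ! 0)"
proof -
  have "length D - 1 < length D" "Suc (length D - 1) = length D"
    using assms unfolding ham_cycle_def by auto
  then show ?thesis
    using assms unfolding ham_cycle_def by (metis mod_self)
qed

lemma ham_cycle_rotate:
  assumes "ham_cycle E U D"
  shows "ham_cycle E U (rotate s D)"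
proof -
  let ?k = "length D"
  have "E (rotate s D ! i) (rotate s D ! (Suc i mod ?k))" if i: "i < ?k" for i
  proof -
    have "(s + Suc i mod ?k) mod ?k = Suc ((s + i) mod ?k) mod ?k"
      by (simp add: mod_add_right_eq mod_Suc_eq)
    moreover have "(s + i) mod ?k < ?k" "Suc i mod ?k < ?k"
      using i by (intro mod_less_divisor; auto)+
    ultimately show ?thesis
      using assms i unfolding ham_cycle_def by (simp add: nth_rotate)
  qed
  then show ?thesis
    using assms unfolding ham_cycle_def by simp
qed

lemma nth_rotate_0: "a < length D \<Longrightarrow> rotate a D ! 0 = D ! a"
  using nth_rotate[of 0 D a] by (cases D) auto

lemma nth_rotate_Suc:
  assumes "i < length D"
  shows "rotate (Suc i) D ! (length D - 1) = D ! i"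
    and "rotate (Suc i) D ! 0 = D ! (Suc i mod length D)"
proof -
  have "Suc i + (length D - 1) = i + length D"
    using assms by simp
  then have mod: "(Suc i + (length D - 1)) mod length D = i"
    using assms by simp
  have "rotate (Suc i) D ! (length D - 1) = D ! ((Suc i + (length D - 1)) mod length D)"
    by (rule nth_rotate) (use assms in linarith)
  then show "rotate (Suc i) D ! (length D - 1) = D ! i"
    by (simp only: mod)
  have "rotate (Suc i) D ! 0 = D ! ((Suc i + 0) mod length D)"
    by (rule nth_rotate) (use assms in linarith)
  then show "rotate (Suc i) D ! 0 = D ! (Suc i mod length D)"
    by (simp only: add_0_right)
qed

lemma nth_rotate_pred:
  assumes "3 \<le> length D"
  shows "rotate (length D - 1) D ! 0 = D ! (length D - 1)"
    and "rotate (length D - 1) D ! 2 = D ! 1"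
proof -
  let ?k = "length D"
  have "?k - 1 + 2 = 1 + ?k"
    using assms by linarith
  then have "(?k - 1 + 2) mod ?k = 1"
    using assms by (simp only: mod_add_self2) simp
  moreover have "D \<noteq> []"
    using assms by (cases D) auto
  ultimately show "rotate (?k - 1) D ! 0 = D ! (?k - 1)" "rotate (?k - 1) D ! 2 = D ! 1"
    using assms by (subst nth_rotate; simp)+
qed

definition position :: "'a list \<Rightarrow> 'a \<Rightarrow> nat" where
  "position D v = (LEAST t. D ! t = v)"

lemma position_nth:
  assumes "distinct D" "t < length D"
  shows "position D (D ! t) = t"
  unfolding position_def
proof (rule Least_equality)
  fix t'
  assume "D ! t' = D ! t"
  then show "t \<le> t'"
    using assms nth_eq_iff_index_eq by (cases "t' < length D") auto
qed simp

lemma ham_cycle_nth_in_Diff: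
  assumes "ham_cycle E U D" "s < length D" "a < length D" "b < length D" "s \<noteq> a" "s \<noteq> b"
  shows "D ! s \<in> U - {D ! a, D ! b}"
  using assms ham_cycle_nth_in[OF assms(1)] nth_eq_iff_index_eq unfolding ham_cycle_def by fastforce

lemma ham_cycle_later_neighbour:
  assumes D: "ham_cycle E U D" and ab: "a < length D" "b < length D"
    and step: "\<And>t. t < length D \<Longrightarrow> t \<noteq> a \<Longrightarrow> t \<noteq> b \<Longrightarrow> t \<noteq> z \<Longrightarrow>
      \<exists>s<length D. s \<noteq> a \<and> s \<noteq> b \<and> E (D ! t) (D ! s) \<and> r t < r s"
  shows "\<forall>v\<in>U - {D ! a, D ! b} - {D ! z}.
    \<exists>u\<in>U - {D ! a, D ! b}. E v u \<and> (r \<circ> position D) v < (r \<circ> position D) u"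
proof
  fix v
  assume v: "v \<in> U - {D ! a, D ! b} - {D ! z}"
  then obtain t where t: "t < length D" "v = D ! t"
    using ham_cycle_obtain_nth[OF D] by (metis DiffD1)
  moreover have "t \<noteq> a" "t \<noteq> b" "t \<noteq> z"
    by (rule notI; use v t in auto)+
  ultimately obtain s where s: "s < length D" "s \<noteq> a" "s \<noteq> b" "E (D ! t) (D ! s)" "r t < r s"
    using step by blast
  have dist: "distinct D"
    using D unfolding ham_cycle_def by simp
  then show "\<exists>u\<in>U - {D ! a, D ! b}. E v u \<and> (r \<circ> position D) v < (r \<circ> position D) u"
    using ham_cycle_nth_in_Diff[OF D s(1) ab s(2,3)] s(1,4,5) t position_nth[OF dist]
    by (intro bexI[of _ "D ! s"]) auto
qed

lemma ham_cycle_cycle_nbrs: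
  assumes D: "ham_cycle E U D" and "symp E" and i: "i < length D"
  obtains p where "p < length D" "Suc p mod length D = i"
    and "D ! p \<noteq> D ! (Suc i mod length D)"
    and "{D ! p, D ! (Suc i mod length D)} \<subseteq> nbrs_in E U (D ! i)"
proof -
  let ?k = "length D"
  define p where "p = (if i = 0 then ?k - 1 else i - 1)"
  have k: "3 \<le> ?k" "distinct D"
    using D unfolding ham_cycle_def by auto
  have p: "p < ?k" "Suc p mod ?k = i"
    using i k unfolding p_def by auto
  have "p \<noteq> Suc i mod ?k"
  proof (cases "Suc i < ?k")
    case True
    then show ?thesis
      using k unfolding p_def by auto
  next
    case False
    then have "Suc i = ?k"
      using i by simp
    then show ?thesis
      using k unfolding p_def by auto
  qed
  moreover have "Suc i mod ?k < ?k"
    using i by (intro mod_less_divisor) auto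
  ultimately have "D ! p \<noteq> D ! (Suc i mod ?k)"
    using nth_eq_iff_index_eq[OF k(2) p(1)] by blast
  moreover have "E (D ! p) (D ! i)" "E (D ! i) (D ! (Suc i mod ?k))"
    using D p i unfolding ham_cycle_def by auto
  then have "E (D ! i) (D ! p)" "E (D ! i) (D ! (Suc i mod ?k))"
    using assms(2) by (auto dest: sympD)
  moreover have "D ! p \<in> U" "D ! (Suc i mod ?k) \<in> U"
    using D nth_mem p(1) \<open>Suc i mod ?k < ?k\<close> unfolding ham_cycle_def by blast+
  ultimately show ?thesis
    using that p unfolding nbrs_in_def by blast
qed

lemma ham_cycle_induced_adjacency:
  assumes D: "ham_cycle E U D" and "symp E" and deg: "\<forall>v\<in>U. card (nbrs_in E U v) \<le> 2"
    and i: "i < length D" and j: "j < length D"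
  shows "E (D ! i) (D ! j) \<longleftrightarrow> j = Suc i mod length D \<or> i = Suc j mod length D"
proof
  let ?k = "length D"
  assume "E (D ! i) (D ! j)"
  obtain p where p: "p < ?k" "Suc p mod ?k = i" "D ! p \<noteq> D ! (Suc i mod ?k)"
    "{D ! p, D ! (Suc i mod ?k)} \<subseteq> nbrs_in E U (D ! i)"
    by (rule ham_cycle_cycle_nbrs[OF D assms(2) i])
  have "finite U"
    using D unfolding ham_cycle_def by auto
  then have fin: "finite (nbrs_in E U (D ! i))"
    by (rule finite_nbrs_in)
  have "D ! i \<in> U"
    using D i unfolding ham_cycle_def by auto
  then have "card (nbrs_in E U (D ! i)) \<le> card {D ! p, D ! (Suc i mod ?k)}"
    using deg p(3) by (simp add: numeral_2_eq_2)
  then have "{D ! p, D ! (Suc i mod ?k)} = nbrs_in E U (D ! i)"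
    by (rule card_seteq[OF fin p(4)])
  moreover have "D ! j \<in> nbrs_in E U (D ! i)"
    using \<open>E (D ! i) (D ! j)\<close> D j unfolding ham_cycle_def nbrs_in_def by auto
  ultimately have "D ! j = D ! p \<or> D ! j = D ! (Suc i mod ?k)"
    by blast
  moreover have dist: "distinct D"
    using D unfolding ham_cycle_def by simp
  moreover have "Suc i mod ?k < ?k"
    using i by (intro mod_less_divisor) auto
  ultimately have "j = p \<or> j = Suc i mod ?k"
    using nth_eq_iff_index_eq[OF dist j p(1)] nth_eq_iff_index_eq[OF dist j, of "Suc i mod ?k"] by argo
  then show "j = Suc i mod ?k \<or> i = Suc j mod ?k"
    using p(2) by blast
next
  assume "j = Suc i mod length D \<or> i = Suc j mod length D"
  then have "E (D ! i) (D ! j) \<or> E (D ! j) (D ! i)"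
    using D i j unfolding ham_cycle_def by auto
  then show "E (D ! i) (D ! j)"
    using assms(2) by (auto dest: sympD)
qed

lemma ham_cycle_nbrs_in_or_chord:
  assumes D: "ham_cycle E U D" and irrefl: "\<And>x. \<not> E x x"
  shows "nbrs_in E U (D ! 1) \<subseteq> {D ! 0, D ! 2} \<or> (\<exists>j. 3 \<le> j \<and> j < length D \<and> E (D ! 1) (D ! j))"
proof (rule disjCI)
  assume no_chord: "\<not> (\<exists>j. 3 \<le> j \<and> j < length D \<and> E (D ! 1) (D ! j))"
  show "nbrs_in E U (D ! 1) \<subseteq> {D ! 0, D ! 2}"
  proof
    fix u
    assume u: "u \<in> nbrs_in E U (D ! 1)"
    then obtain j where j: "j < length D" "u = D ! j"
      using D unfolding ham_cycle_def nbrs_in_def by (metis (no_types, lifting) in_set_conv_nth mem_Collect_eq)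
    have "E (D ! 1) (D ! j)"
      using u j unfolding nbrs_in_def by simp
    then have "j \<noteq> 1" "\<not> 3 \<le> j"
      using irrefl no_chord j(1) by auto
    then have "j = 0 \<or> j = 2"
      by linarith
    then show "u \<in> {D ! 0, D ! 2}"
      using j by auto
  qed
qed

lemma even_Suc_mod_iff:
  assumes "t < k" "even k"
  shows "even (Suc t mod k) \<longleftrightarrow> odd t"
proof (cases "Suc t < k")
  case False
  then have "Suc t = k"
    using assms(1) by simp
  then show ?thesis
    using assms(2) by auto
qed simp

lemma cyclic_chain_eq:
  fixes A :: "nat \<Rightarrow> 'b::order"
  assumes chain: "\<forall>i<k. A i \<le> A (Suc i mod k)" and i: "i < k"
  shows "A i = A 0"
proof -
  define B where "B n = A (min n (k - 1))" for n
  have "B n \<le> B (Suc n)" for n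
  proof (cases "Suc n < k")
    case True
    then have "A n \<le> A (Suc n)"
      using chain by (metis Suc_lessD mod_less)
    moreover have "min n (k - 1) = n" "min (Suc n) (k - 1) = Suc n"
      using True by auto
    ultimately show ?thesis
      unfolding B_def by simp
  next
    case False
    then have "min n (k - 1) = k - 1" "min (Suc n) (k - 1) = k - 1"
      by auto
    then show ?thesis
      unfolding B_def by simp
  qed
  then have "B 0 \<le> B i" "B i \<le> B (k - 1)"
    using i by (simp_all add: lift_Suc_mono_le)
  moreover have "k - 1 < k" "Suc (k - 1) mod k = 0"
    using i by auto
  then have "A (k - 1) \<le> A 0"
    using chain by metis
  moreover have "B 0 = A 0" "B i = A i" "B (k - 1) = A (k - 1)"
    using i unfolding B_def by auto
  ultimately show ?thesis
    by (metis antisym order.trans)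
qed

lemma ex_two_in_Diff:
  assumes "finite B" "A \<subseteq> B" "card A + 2 \<le> card B"
  obtains c\<^sub>1 c\<^sub>2 where "c\<^sub>1 \<in> B - A" "c\<^sub>2 \<in> B - A" "c\<^sub>1 \<noteq> c\<^sub>2"
proof -
  have "\<not> card (B - A) \<le> Suc 0"
    using assms by (simp add: card_Diff_subset finite_subset)
  then show ?thesis
    using that card_le_Suc0_iff_eq[of "B - A"] assms(1) by blast
qed

section \<open>Extending a colouring to the cycle\<close>

locale extension_setting =
  fixes V :: "'a set" and E :: "'a \<Rightarrow> 'a \<Rightarrow> bool" and \<Delta> :: nat
    and \<phi> :: "'a \<Rightarrow> nat option" and U :: "'a set"
  assumes graph: "graph V E" and U_subset: "U \<subseteq> V"
    and proper: "partial_proper_coloring V E \<Delta> \<phi>"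
    and uncoloured: "\<forall>v\<in>U. \<phi> v = None"
    and degree_le: "\<forall>v\<in>U. degree V E v \<le> \<Delta>"
begin

abbreviation extendable :: bool where
  "extendable \<equiv> \<exists>\<phi>'. partial_proper_coloring V E \<Delta> \<phi>'
     \<and> (\<forall>u\<in>U. \<phi>' u \<noteq> None) \<and> (\<forall>u\<in>V - U. \<phi>' u = \<phi> u)"

lemma finite_U: "finite U"
  using graph U_subset finite_subset unfolding graph_def by blast

lemma E_sym: "E x y \<Longrightarrow> E y x"
  using graph unfolding graph_def by blast

lemma E_irrefl: "\<not> E x x"
  using graph unfolding graph_def by blast

lemma symp_E: "symp E"
  by (rule sympI) (erule E_sym)

lemma demand_le:
  assumes "v \<in> U"
  shows "demand E \<phi> U v \<le> \<Delta>"
proof -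
  let ?outer = "{u\<in>V - U. E v u}"
  have fin: "finite ?outer"
    using graph unfolding graph_def by auto
  have "forbidden E \<phi> v \<subseteq> (\<lambda>u. the (\<phi> u)) ` ?outer"
    using graph uncoloured unfolding forbidden_def graph_def by force
  then have "card (forbidden E \<phi> v) \<le> card ((\<lambda>u. the (\<phi> u)) ` ?outer)"
    using fin by (intro card_mono) auto
  also have "\<dots> \<le> card ?outer"
    using fin by (rule card_image_le)
  finally have "card (forbidden E \<phi> v) \<le> card ?outer" .
  moreover have "{u\<in>V. E v u} = ?outer \<union> nbrs_in E U v" "?outer \<inter> nbrs_in E U v = {}"
    using U_subset unfolding nbrs_in_def by auto
  then have "degree V E v = card ?outer + card (nbrs_in E U v)"
    unfolding degree_def using fin finite_nbrs_in[OF finite_U] by (simp add: card_Un_disjoint)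
  moreover have "degree V E v \<le> \<Delta>"
    using degree_le assms by blast
  ultimately show ?thesis
    unfolding demand_def by linarith
qed

lemma extendable_if_greedy_order:
  assumes "partial_proper_coloring V E \<Delta> \<psi>" "\<forall>v. v \<notin> U \<longrightarrow> \<psi> v = \<phi> v"
    and "S \<subseteq> U" "\<forall>v\<in>U - S. \<psi> v \<noteq> None" "greedy_order E \<Delta> \<psi> S f"
  shows extendable
proof -
  obtain \<psi>' where \<psi>': "partial_proper_coloring V E \<Delta> \<psi>'" "\<forall>v\<in>S. \<psi>' v \<noteq> None"
      "\<forall>v. v \<notin> S \<longrightarrow> \<psi>' v = \<psi> v"
    using greedy_order_extension[OF graph _ assms(1,5)] assms(3) U_subset by blast
  then have "\<forall>u\<in>U. \<psi>' u \<noteq> None"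
    using assms(4) by (metis DiffI)
  moreover have "\<forall>u\<in>V - U. \<psi>' u = \<psi> u"
    using \<psi>'(3) assms(3) by auto
  ultimately show ?thesis
    using \<psi>'(1) assms(2) by auto
qed

lemma extendable_if_slack_at_last:
  assumes D: "ham_cycle E U D" and slack: "demand E \<phi> U (D ! (length D - 1)) < \<Delta>"
  shows extendable
proof -
  have "greedy_order E \<Delta> \<phi> U (position D)"
    unfolding greedy_order_def
  proof
    fix v
    assume "v \<in> U"
    then obtain t where t: "t < length D" "v = D ! t"
      using ham_cycle_obtain_nth[OF D] by blast
    have "demand E \<phi> U v < \<Delta> \<or> (\<exists>u\<in>U. E v u \<and> position D v < position D u)"
    proof (cases "Suc t < length D")
      case True
      then show ?thesis
        using t ham_cycle_edge[OF D] ham_cycle_nth_in[OF D] position_nth D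
        unfolding ham_cycle_def by (metis lessI)
    next
      case False
      then have "t = length D - 1"
        using t by simp
      then show ?thesis
        using t slack by simp
    qed
    then show "demand E \<phi> U v \<le> \<Delta> \<and>
        (demand E \<phi> U v < \<Delta> \<or> (\<exists>u\<in>U. E v u \<and> position D v < position D u))"
      using demand_le[OF \<open>v \<in> U\<close>] by blast
  qed
  then show ?thesis
    using extendable_if_greedy_order[OF proper _ subset_refl] uncoloured by auto
qed

text \<open>Giving the first vertex a colour that its predecessor already sees as forbidden gives the
  predecessor slack once everything else is coloured.\<close>
lemma extendable_if_forbidden_at_last:
  assumes D: "ham_cycle E U D"
    and c: "c \<in> forbidden E \<phi> (D ! (length D - 1))" "c \<notin> forbidden E \<phi> (D ! 0)"
  shows extendable
proof -
  let ?k = "length D" and ?S = "U - {D ! 0}"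
  define \<psi> where "\<psi> = \<phi>(D ! 0 := Some c)"
  have k: "3 \<le> ?k" "distinct D"
    using D unfolding ham_cycle_def by auto
  have "0 < ?k"
    using k(1) by linarith
  then have first: "D ! 0 \<in> U"
    by (rule ham_cycle_nth_in[OF D])
  have "greedy_order E \<Delta> \<psi> ?S (position D)"
    unfolding greedy_order_def
  proof
    fix v
    assume v: "v \<in> ?S"
    then obtain t where t: "t < ?k" "v = D ! t" "t \<noteq> 0"
      using ham_cycle_obtain_nth[OF D] by (metis DiffE singletonI)
    have drop: "demand E \<psi> ?S v + (if E v (D ! 0) \<and> c \<in> forbidden E \<phi> v then 1 else 0) \<le> \<Delta>"
      using demand_fun_upd[OF graph finite_U first, of \<phi> c v] demand_le v unfolding \<psi>_def by fastforce
    have "demand E \<psi> ?S v < \<Delta> \<or> (\<exists>u\<in>?S. E v u \<and> position D v < position D u)"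
    proof (cases "Suc t < ?k")
      case True
      have "D ! Suc t \<noteq> D ! 0"
        using True k(2) nth_eq_iff_index_eq by fastforce
      then show ?thesis
        using True t ham_cycle_edge[OF D True] ham_cycle_nth_in[OF D True] position_nth[OF k(2)]
        by (metis DiffI Suc_lessD lessI singletonD)
    next
      case False
      then have "t = ?k - 1"
        using t by simp
      then show ?thesis
        using drop c(1) t ham_cycle_edge_last[OF D] by auto
    qed
    then show "demand E \<psi> ?S v \<le> \<Delta> \<and>
        (demand E \<psi> ?S v < \<Delta> \<or> (\<exists>u\<in>?S. E v u \<and> position D v < position D u))"
      using drop by linarith
  qed
  moreover have "partial_proper_coloring V E \<Delta> \<psi>"
    unfolding \<psi>_def using partial_proper_coloring_fun_upd[OF graph proper _ c(2)]
      forbidden_subset_colours[OF graph proper] c(1) by blast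
  ultimately show ?thesis
    using extendable_if_greedy_order[of \<psi> ?S] first unfolding \<psi>_def by auto
qed

text \<open>Two non-adjacent neighbours \<open>x\<close>, \<open>y\<close> of \<open>z\<close> receiving the same colour give \<open>z\<close> slack.\<close>
lemma extendable_if_common_colour:
  assumes xyz: "x \<in> U" "y \<in> U" "z \<in> U" "x \<noteq> y" "\<not> E x y" "E z x" "E z y"
    and c: "c \<in> {1..\<Delta>}" "c \<notin> forbidden E \<phi> x" "c \<notin> forbidden E \<phi> y"
    and later: "\<forall>v\<in>U - {x, y} - {z}. \<exists>u\<in>U - {x, y}. E v u \<and> f v < (f u :: nat)"
  shows extendable
proof -
  let ?S = "U - {x, y}"
  define \<psi>\<^sub>x where "\<psi>\<^sub>x = \<phi>(x := Some c)"
  define \<psi> where "\<psi> = \<psi>\<^sub>x(y := Some c)"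
  have cy: "c \<notin> forbidden E \<psi>\<^sub>x y"
    using c(3) forbidden_fun_upd_not_adjacent E_sym xyz(5) unfolding \<psi>\<^sub>x_def by metis
  have proper_\<psi>: "partial_proper_coloring V E \<Delta> \<psi>"
    unfolding \<psi>_def \<psi>\<^sub>x_def
    by (intro partial_proper_coloring_fun_upd[OF graph _ c(1)] graph proper c(2) cy[unfolded \<psi>\<^sub>x_def])
  have "greedy_order E \<Delta> \<psi> ?S f"
    unfolding greedy_order_def
  proof
    fix v
    assume v: "v \<in> ?S"
    have "U - {x} - {y} = ?S" "y \<in> U - {x}" "finite (U - {x})"
      using xyz finite_U by auto
    then have "demand E \<psi> ?S v + (if E v y \<and> c \<in> forbidden E \<psi>\<^sub>x v then 1 else 0)
        \<le> demand E \<psi>\<^sub>x (U - {x}) v"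
      using demand_fun_upd[OF graph, of "U - {x}" y \<psi>\<^sub>x c v] unfolding \<psi>_def by simp
    moreover have "demand E \<psi>\<^sub>x (U - {x}) v \<le> \<Delta>"
      using demand_fun_upd[OF graph finite_U xyz(1), of \<phi> c v] demand_le v unfolding \<psi>\<^sub>x_def
      by fastforce
    moreover have "c \<in> forbidden E \<psi>\<^sub>x z"
      using xyz(6) unfolding \<psi>\<^sub>x_def forbidden_def by auto
    ultimately show "demand E \<psi> ?S v \<le> \<Delta> \<and>
        (demand E \<psi> ?S v < \<Delta> \<or> (\<exists>u\<in>?S. E v u \<and> f v < f u))"
      using later v xyz(7) by (cases "v = z") auto
  qed
  moreover have "\<forall>v. v \<notin> U \<longrightarrow> \<psi> v = \<phi> v" "\<forall>v\<in>U - ?S. \<psi> v \<noteq> None"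
    using xyz(1,2) unfolding \<psi>_def \<psi>\<^sub>x_def by auto
  ultimately show ?thesis
    using extendable_if_greedy_order[OF proper_\<psi>] by blast
qed

text \<open>The greedy order runs forward from \<open>D ! 3\<close> to \<open>D ! j\<close>, backward from the last vertex
  to \<open>D ! j\<close>, and ends at \<open>D ! 1\<close>, which gains slack from \<open>D ! 0\<close> and \<open>D ! 2\<close> sharing a colour.\<close>
lemma extendable_if_chord:
  assumes D: "ham_cycle E U D" and j: "3 \<le> j" "j < length D"
    and nonadj: "\<not> E (D ! 0) (D ! 2)" and chord: "E (D ! 1) (D ! j)"
    and c: "c \<in> {1..\<Delta>}" "c \<notin> forbidden E \<phi> (D ! 0)" "c \<notin> forbidden E \<phi> (D ! 2)"
  shows extendable
proof -
  let ?k = "length D"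
  define r where "r t = (if t = 1 then ?k + 1 else if t < j then t else ?k + j - t)" for t
  have bounds: "0 < ?k" "2 < ?k" "1 < ?k"
    using j by linarith+
  have step: "\<exists>s<?k. s \<noteq> 0 \<and> s \<noteq> 2 \<and> E (D ! t) (D ! s) \<and> r t < r s"
    if t: "t < ?k" "t \<noteq> 0" "t \<noteq> 2" "t \<noteq> 1" for t
  proof (cases t j rule: linorder_cases)
    case less
    then show ?thesis
      using ham_cycle_edge[OF D, of t] t j unfolding r_def by (intro exI[of _ "Suc t"]) auto
  next
    case equal
    then show ?thesis
      using chord E_sym t j unfolding r_def by (intro exI[of _ 1]) auto
  next
    case greater
    then have "E (D ! t) (D ! (t - 1))"
      using ham_cycle_edge[OF D, of "t - 1"] E_sym t by simp
    then show ?thesis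
      using greater t j unfolding r_def by (intro exI[of _ "t - 1"]) auto
  qed
  show ?thesis
  proof (rule extendable_if_common_colour[of "D ! 0" "D ! 2" "D ! 1" c "r \<circ> position D"])
    show "D ! 0 \<in> U" "D ! 2 \<in> U" "D ! 1 \<in> U"
      using ham_cycle_nth_in[OF D] bounds by blast+
    show "D ! 0 \<noteq> D ! 2"
      using D bounds nth_eq_iff_index_eq[of D 0 2] unfolding ham_cycle_def by simp
    show "E (D ! 1) (D ! 0)" "E (D ! 1) (D ! 2)"
      using ham_cycle_edge[OF D, of 0] ham_cycle_edge[OF D, of 1] E_sym j
      by (simp_all add: numeral_2_eq_2)
    show "\<forall>v\<in>U - {D ! 0, D ! 2} - {D ! 1}.
        \<exists>u\<in>U - {D ! 0, D ! 2}. E v u \<and> (r \<circ> position D) v < (r \<circ> position D) u"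
      using ham_cycle_later_neighbour[OF D bounds(1,2) step] by blast
  qed (fact nonadj c)+
qed

text \<open>The greedy order runs from \<open>D ! (m + 1)\<close> to the last vertex, over the edge \<open>wrap\<close>
  to \<open>D ! 1\<close>, and ends at \<open>D ! (m - 1)\<close>, a common neighbour of \<open>D ! 0\<close> and \<open>D ! m\<close>.\<close>
lemma extendable_if_first_non_neighbour:
  assumes D: "ham_cycle E U D" and m: "2 \<le> m" "m < length D"
    and nonadj: "\<not> E (D ! 0) (D ! m)" and adj: "E (D ! 0) (D ! (m - 1))"
    and wrap: "E (D ! (length D - 1)) (D ! 1)"
    and c: "c \<in> {1..\<Delta>}" "c \<notin> forbidden E \<phi> (D ! 0)" "c \<notin> forbidden E \<phi> (D ! m)"
  shows extendable
proof -
  let ?k = "length D"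
  define r where "r t = (if m < t then t - m else ?k + t)" for t
  have bounds: "0 < ?k" "m < ?k" "m - 1 < ?k"
    using m by linarith+
  have step: "\<exists>s<?k. s \<noteq> 0 \<and> s \<noteq> m \<and> E (D ! t) (D ! s) \<and> r t < r s"
    if t: "t < ?k" "t \<noteq> 0" "t \<noteq> m" "t \<noteq> m - 1" for t
  proof (cases "m < t")
    case True
    show ?thesis
    proof (cases "Suc t < ?k")
      case True
      then show ?thesis
        using ham_cycle_edge[OF D True] \<open>m < t\<close> unfolding r_def by (intro exI[of _ "Suc t"]) auto
    next
      case False
      then have "t = ?k - 1"
        using t by simp
      then show ?thesis
        using wrap \<open>m < t\<close> m unfolding r_def by (intro exI[of _ 1]) auto
    qed
  next
    case False
    then have "Suc t < m"
      using t by simp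
    then show ?thesis
      using ham_cycle_edge[OF D, of t] m unfolding r_def by (intro exI[of _ "Suc t"]) auto
  qed
  show ?thesis
  proof (rule extendable_if_common_colour[of "D ! 0" "D ! m" "D ! (m - 1)" c "r \<circ> position D"])
    show "D ! 0 \<in> U" "D ! m \<in> U" "D ! (m - 1) \<in> U"
      using ham_cycle_nth_in[OF D] bounds by blast+
    show "D ! 0 \<noteq> D ! m"
      using D bounds m nth_eq_iff_index_eq[of D 0 m] unfolding ham_cycle_def by simp
    show "E (D ! (m - 1)) (D ! 0)" "E (D ! (m - 1)) (D ! m)"
      using adj E_sym ham_cycle_edge[OF D, of "m - 1"] m by auto
    show "\<forall>v\<in>U - {D ! 0, D ! m} - {D ! (m - 1)}.
        \<exists>u\<in>U - {D ! 0, D ! m}. E v u \<and> (r \<circ> position D) v < (r \<circ> position D) u"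
      using ham_cycle_later_neighbour[OF D bounds(1,2) step] by blast
  qed (fact nonadj c)+
qed

lemma extendable_if_slack:
  assumes D: "ham_cycle E U D" and v: "v \<in> U" "demand E \<phi> U v < \<Delta>"
  shows extendable
proof -
  obtain i where i: "i < length D" "v = D ! i"
    using ham_cycle_obtain_nth[OF D v(1)] by blast
  then have "demand E \<phi> U (rotate (Suc i) D ! (length (rotate (Suc i) D) - 1)) < \<Delta>"
    using nth_rotate_Suc(1)[OF i(1)] v(2) by (simp only: length_rotate)
  then show ?thesis
    by (rule extendable_if_slack_at_last[OF ham_cycle_rotate[OF D]])
qed

lemma extendable_if_forbidden_not_inherited:
  assumes D: "ham_cycle E U D" and i: "i < length D"
    and c: "c \<in> forbidden E \<phi> (D ! i)" "c \<notin> forbidden E \<phi> (D ! (Suc i mod length D))"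
  shows extendable
proof (rule extendable_if_forbidden_at_last[OF ham_cycle_rotate[OF D, of "Suc i"]])
  show "c \<in> forbidden E \<phi> (rotate (Suc i) D ! (length (rotate (Suc i) D) - 1))"
    using nth_rotate_Suc(1)[OF i] c(1) by (simp only: length_rotate)
  show "c \<notin> forbidden E \<phi> (rotate (Suc i) D ! 0)"
    unfolding nth_rotate_Suc(2)[OF i] by (rule c(2))
qed

lemma two_le_card_nbrs_in:
  assumes D: "ham_cycle E U D" and v: "v \<in> U"
  shows "2 \<le> card (nbrs_in E U v)"
proof -
  obtain i where i: "i < length D" "v = D ! i"
    using ham_cycle_obtain_nth[OF D v] by blast
  obtain p where p: "D ! p \<noteq> D ! (Suc i mod length D)"
    "{D ! p, D ! (Suc i mod length D)} \<subseteq> nbrs_in E U (D ! i)"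
    by (rule ham_cycle_cycle_nbrs[OF D symp_E i(1)])
  have "card {D ! p, D ! (Suc i mod length D)} \<le> card (nbrs_in E U v)"
    unfolding i(2) by (rule card_mono[OF finite_nbrs_in[OF finite_U] p(2)])
  then show ?thesis
    using p(1) by simp
qed

text \<open>Rotate an endpoint of a non-edge to the front and let \<open>D ! m\<close> be the first vertex not
  adjacent to it; the hypothesis, applied to the rotation starting at the last vertex, supplies
  the edge needed to pass from the end of the cycle to \<open>D ! 1\<close>.\<close>
lemma extendable_if_square_of_cycle:
  assumes D: "ham_cycle E U D" and square: "\<forall>D'. ham_cycle E U D' \<longrightarrow> E (D' ! 0) (D' ! 2)"
    and incomplete: "\<not> induced_complete E U"
    and c: "c \<in> {1..\<Delta>}" "\<forall>v\<in>U. c \<notin> forbidden E \<phi> v"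
  shows extendable
proof -
  let ?k = "length D"
  obtain x y where xy: "x \<in> U" "y \<in> U" "x \<noteq> y" "\<not> E x y"
    using incomplete unfolding induced_complete_def by blast
  obtain a where a: "a < ?k" "x = D ! a"
    using ham_cycle_obtain_nth[OF D xy(1)] by blast
  let ?D = "rotate a D"
  have D': "ham_cycle E U ?D"
    by (rule ham_cycle_rotate[OF D])
  have k: "3 \<le> ?k"
    using D unfolding ham_cycle_def by simp
  have x: "?D ! 0 = x"
    using nth_rotate_0[OF a(1)] a(2) by simp
  obtain b where b: "b < ?k" "y = ?D ! b"
    using ham_cycle_obtain_nth[OF D' xy(2)] by auto
  have "0 < b \<and> \<not> E (?D ! 0) (?D ! b)"
    using b x xy(3,4) by (cases b) auto
  then obtain m where m: "0 < m" "m \<le> b" "\<not> E (?D ! 0) (?D ! m)"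
    and before: "\<And>n. 0 < n \<Longrightarrow> n < m \<Longrightarrow> E (?D ! 0) (?D ! n)"
    using LeastI[of "\<lambda>m. 0 < m \<and> \<not> E (?D ! 0) (?D ! m)"] Least_le[of "\<lambda>m. 0 < m \<and> \<not> E (?D ! 0) (?D ! m)"]
      not_less_Least[of _ "\<lambda>m. 0 < m \<and> \<not> E (?D ! 0) (?D ! m)"] by (metis (no_types, lifting))
  have "E (?D ! 0) (?D ! 1)"
    using ham_cycle_edge[OF D', of 0] k by simp
  then have m2: "2 \<le> m"
    using m by (cases "m = 1") auto
  have "E (rotate (?k - 1) ?D ! 0) (rotate (?k - 1) ?D ! 2)"
    using square ham_cycle_rotate[OF D'] by blast
  then have wrap: "E (?D ! (?k - 1)) (?D ! 1)"
    using nth_rotate_pred[of ?D] k by simp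
  show ?thesis
    using extendable_if_first_non_neighbour[OF D' m2 _ m(3) before[of "m - 1"] _ c(1)] m b wrap c(2)
      ham_cycle_nth_in[OF D'] x xy(1) m2 by simp
qed

lemma extendable_if_even_induced_cycle:
  assumes D: "ham_cycle E U D"
    and adj: "\<forall>i<length D. \<forall>j<length D. E (D ! i) (D ! j) \<longleftrightarrow> j = Suc i mod length D \<or> i = Suc j mod length D"
    and even: "even (length D)"
    and c: "c\<^sub>1 \<noteq> c\<^sub>2" "c\<^sub>1 \<in> {1..\<Delta>}" "c\<^sub>2 \<in> {1..\<Delta>}"
      "\<forall>v\<in>U. c\<^sub>1 \<notin> forbidden E \<phi> v \<and> c\<^sub>2 \<notin> forbidden E \<phi> v"
  shows extendable
proof -
  define col where "col v = (if even (position D v) then c\<^sub>1 else c\<^sub>2)" for v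
  have "col u \<noteq> col v" if uv: "u \<in> U" "v \<in> U" "E u v" for u v
  proof -
    obtain i j where ij: "i < length D" "u = D ! i" "j < length D" "v = D ! j"
      using ham_cycle_obtain_nth[OF D] uv(1,2) by metis
    then have "j = Suc i mod length D \<or> i = Suc j mod length D"
      using adj uv(3) by blast
    then have "even i \<longleftrightarrow> odd j"
      using even_Suc_mod_iff[OF ij(1) even] even_Suc_mod_iff[OF ij(3) even] by auto
    moreover have "distinct D"
      using D unfolding ham_cycle_def by simp
    then have "position D u = i" "position D v = j"
      using ij position_nth by auto
    ultimately show ?thesis
      using c(1) unfolding col_def by auto
  qed
  then have "partial_proper_coloring V E \<Delta> (\<lambda>v. if v \<in> U then Some (col v) else \<phi> v)"
    using c by (intro partial_proper_coloring_override[OF graph proper]) (auto simp: col_def)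
  then show ?thesis
    by auto
qed

lemma extendable_if_induced_cycle:
  assumes D: "ham_cycle E U D" and deg: "\<forall>v\<in>U. card (nbrs_in E U v) \<le> 2"
    and not_odd: "\<not> induced_odd_cycle E U"
    and c: "c\<^sub>1 \<noteq> c\<^sub>2" "c\<^sub>1 \<in> {1..\<Delta>}" "c\<^sub>2 \<in> {1..\<Delta>}"
      "\<forall>v\<in>U. c\<^sub>1 \<notin> forbidden E \<phi> v \<and> c\<^sub>2 \<notin> forbidden E \<phi> v"
  shows extendable
proof -
  have adj: "\<forall>i<length D. \<forall>j<length D. E (D ! i) (D ! j) \<longleftrightarrow> j = Suc i mod length D \<or> i = Suc j mod length D"
    using ham_cycle_induced_adjacency[OF D symp_E deg] by blast
  have "even (length D)"
    using not_odd D adj unfolding induced_odd_cycle_def ham_cycle_def by blast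
  then show ?thesis
    by (rule extendable_if_even_induced_cycle[OF D adj _ c])
qed

lemma ex_two_free_colours:
  assumes D: "ham_cycle E U D"
    and tight: "\<forall>v\<in>U. demand E \<phi> U v = \<Delta>" and same: "\<forall>v\<in>U. forbidden E \<phi> v = A"
  obtains c\<^sub>1 c\<^sub>2 where "c\<^sub>1 \<noteq> c\<^sub>2" "c\<^sub>1 \<in> {1..\<Delta>}" "c\<^sub>2 \<in> {1..\<Delta>}"
    "\<forall>v\<in>U. c\<^sub>1 \<notin> forbidden E \<phi> v \<and> c\<^sub>2 \<notin> forbidden E \<phi> v"
proof -
  have "0 < length D"
    using D unfolding ham_cycle_def by linarith
  then have v\<^sub>0: "D ! 0 \<in> U"
    by (rule ham_cycle_nth_in[OF D])
  have "A \<subseteq> {1..\<Delta>}"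
    using forbidden_subset_colours[OF graph proper] same v\<^sub>0 by blast
  moreover have "card A + 2 \<le> card {1..\<Delta>}"
    using tight same v\<^sub>0 two_le_card_nbrs_in[OF D v\<^sub>0] unfolding demand_def by fastforce
  ultimately obtain c\<^sub>1 c\<^sub>2 where "c\<^sub>1 \<in> {1..\<Delta>} - A" "c\<^sub>2 \<in> {1..\<Delta>} - A" "c\<^sub>1 \<noteq> c\<^sub>2"
    by (rule ex_two_in_Diff[OF finite_atLeastAtMost])
  then show ?thesis
    using that same by auto
qed

lemma extendable_if_tight:
  assumes D: "ham_cycle E U D"
    and incomplete: "\<not> induced_complete E U" and not_odd: "\<not> induced_odd_cycle E U"
    and tight: "\<forall>v\<in>U. demand E \<phi> U v = \<Delta>" and same: "\<forall>v\<in>U. forbidden E \<phi> v = A"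
  shows extendable
proof -
  obtain c\<^sub>1 c\<^sub>2 where c: "c\<^sub>1 \<noteq> c\<^sub>2" "c\<^sub>1 \<in> {1..\<Delta>}" "c\<^sub>2 \<in> {1..\<Delta>}"
    "\<forall>v\<in>U. c\<^sub>1 \<notin> forbidden E \<phi> v \<and> c\<^sub>2 \<notin> forbidden E \<phi> v"
    using ex_two_free_colours[OF D tight same] by blast
  consider (square) "\<forall>D'. ham_cycle E U D' \<longrightarrow> E (D' ! 0) (D' ! 2)"
    | (chord) D' j where "ham_cycle E U D'" "3 \<le> j" "j < length D'" "\<not> E (D' ! 0) (D' ! 2)"
        "E (D' ! 1) (D' ! j)"
    | (induced) D' where "ham_cycle E U D'" "nbrs_in E U (D' ! 1) \<subseteq> {D' ! 0, D' ! 2}"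
    using ham_cycle_nbrs_in_or_chord E_irrefl by blast
  then show ?thesis
  proof cases
    case square
    then show ?thesis
      using extendable_if_square_of_cycle[OF D square incomplete] c by blast
  next
    case chord
    have "0 < length D'" "2 < length D'"
      using chord(2,3) by linarith+
    then have "D' ! 0 \<in> U" "D' ! 2 \<in> U"
      by (simp_all add: ham_cycle_nth_in[OF chord(1)])
    then show ?thesis
      using extendable_if_chord[OF chord, of c\<^sub>1] c by blast
  next
    case induced
    have "card (nbrs_in E U (D' ! 1)) \<le> card {D' ! 0, D' ! 2}"
      using card_mono[OF _ induced(2)] by simp
    also have "\<dots> \<le> 2"
      by (simp add: card_insert_le_m1)
    finally have "card (nbrs_in E U (D' ! 1)) \<le> 2" .
    moreover have "1 < length D'"
      using induced(1) unfolding ham_cycle_def by linarith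
    then have "D' ! 1 \<in> U"
      by (rule ham_cycle_nth_in[OF induced(1)])
    moreover have "card (nbrs_in E U v) = \<Delta> - card A" if "v \<in> U" for v
      using tight same that unfolding demand_def by (metis add_diff_cancel_left')
    ultimately have "\<forall>v\<in>U. card (nbrs_in E U v) \<le> 2"
      by metis
    then show ?thesis
      by (rule extendable_if_induced_cycle[OF D _ not_odd c])
  qed
qed

lemma extendable_if_ham_cycle:
  assumes D: "ham_cycle E U D"
    and incomplete: "\<not> induced_complete E U" and not_odd: "\<not> induced_odd_cycle E U"
  shows extendable
proof (cases "\<exists>v\<in>U. demand E \<phi> U v < \<Delta>")
  case True
  then show ?thesis
    using extendable_if_slack[OF D] by blast
next
  case False
  then have tight: "\<forall>v\<in>U. demand E \<phi> U v = \<Delta>"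
    using demand_le by fastforce
  show ?thesis
  proof (cases "\<exists>i<length D. \<not> forbidden E \<phi> (D ! i) \<subseteq> forbidden E \<phi> (D ! (Suc i mod length D))")
    case True
    then show ?thesis
      using extendable_if_forbidden_not_inherited[OF D] by blast
  next
    case False
    then have "forbidden E \<phi> (D ! i) = forbidden E \<phi> (D ! 0)" if "i < length D" for i
      using cyclic_chain_eq[of "length D" "\<lambda>i. forbidden E \<phi> (D ! i)"] that by blast
    then have "\<forall>v\<in>U. forbidden E \<phi> v = forbidden E \<phi> (D ! 0)"
      using ham_cycle_obtain_nth[OF D] by metis
    then show ?thesis
      by (rule extendable_if_tight[OF D incomplete not_odd tight])
  qed
qed

end

theorem lemma3p2:
  fixes V :: "'a set" and E :: "'a \<Rightarrow> 'a \<Rightarrow> bool" and C :: "'a list"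
    and \<Delta> :: nat and \<phi> :: "'a \<Rightarrow> nat option"
  assumes "graph V E"
    and "\<Delta> > 0"
    and "removable V E C"
    and "max_degree_on_cycle V E C \<le> \<Delta>"
    and "partial_proper_coloring V E \<Delta> \<phi>"
    and "\<forall>v\<in>set C. \<phi> v = None"
  shows "\<exists>\<phi>'. partial_proper_coloring V E \<Delta> \<phi>'
           \<and> (\<forall>u\<in>set C. \<phi>' u \<noteq> None)
           \<and> (\<forall>u\<in>V - set C. \<phi>' u = \<phi> u)"
proof -
  have cycle: "simple_cycle V E C"
    and incomplete: "\<not> induced_complete E (set C)" and not_odd: "\<not> induced_odd_cycle E (set C)"
    using assms(3) unfolding removable_def by auto
  have "degree V E v \<le> max_degree_on_cycle V E C" if "v \<in> set C" for v
    unfolding max_degree_on_cycle_def using that by (intro Max_ge) auto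
  then have "\<forall>v\<in>set C. degree V E v \<le> \<Delta>"
    using assms(4) order.trans by blast
  moreover have "set C \<subseteq> V"
    using cycle unfolding simple_cycle_def by simp
  ultimately interpret extension_setting V E \<Delta> \<phi> "set C"
    using assms(1,5,6) by unfold_locales
  show ?thesis
    by (rule extendable_if_ham_cycle[OF simple_cycle_imp_ham_cycle[OF cycle] incomplete not_odd])
qed

end
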